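(* Assume conditions (C1) and (C2) stated in the context. Then there exists a constant $\varepsilon^{\mathcal P}_{\mathrm{iso}}>0$ such that for every $p,q\in\mathcal P$, \[ \mathcal G_p(R_q)\in\{0\}\cup[\varepsilon^{\mathcal P}_{\mathrm{iso}},\infty). \]
   Context: $\mathcal X$ is a measurable space with probability distribution $d_0$; $\mathcal A$ is a separable metric space; $\pi_0$ is a Markov kernel $\mathcal X\to\Delta(\mathcal A)$ with topological supports $S_x:=\mathrm{supp}(\pi_0(\cdot\mid x))$; $\|f\|_{\infty,\mathrm{supp}(\pi_0)}:=\sup\{|f(x,a)|:x\in\mathcal X,a\in S_x\}$. A fixed measurable tie-breaking rule assigns to each measurable reward $R:\mathcal X\times\mathcal A\to\mathbb R$ a measurable map $a_R$ with $a_R(x)\in\arg\max_{a\in S_x}R(x,a)$. $\mathcal P$ is a set; each $p\in\mathcal P$ induces a $\pi_0$-centered (i.e. $\int R_p(x,a)\pi_0(da\mid x)=0$ for all $x$) measurable reward $R_p$; $\mathcal F_{\mathcal P}:=\{R_p:p\in\mathcal P\}$, $a_p:=a_{R_p}$. (C1) $\mathcal F_{\mathcal P}$ is compact under $\|\cdot\|_{\infty,\mathrm{supp}(\pi_0)}$, and for every $R\in\mathcal F_{\mathcal P}$, $a\mapsto R(x,a)$ is continuous on $S_x$ for $d_0$-a.e. $x$. (C2) There is $\Delta^{\mathcal P}_{\min}>0$ such that for every $p\in\mathcal P$, $d_0$-a.s. in $X$, $a_p(X)$ is the unique maximizer and $R_p(X,a_p(X))-\sup_{a\in S_X,a\neq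 a_p(X)}R_p(X,a)\ge\Delta^{\mathcal P}_{\min}$. Temperature-zero regret: $\mathcal G_p(R):=\mathbb E_{X\sim d_0}[R_p(X,a_p(X))-R_p(X,a_R(X))]$. *)

theory Defs
  imports "HOL-Probability.Probability"
begin

definition tsupp :: "'a::topological_space measure \<Rightarrow> 'a set" where
  "tsupp M = {a. \<forall>U. open U \<and> a \<in> U \<longrightarrow> emeasure M U > 0}"

definition supp_dist :: "'x measure \<Rightarrow> ('x \<Rightarrow> 'a set) \<Rightarrow> ('x \<Rightarrow> 'a \<Rightarrow> real)
    \<Rightarrow> ('x \<Rightarrow> 'a \<Rightarrow> real) \<Rightarrow> ereal" where
  "supp_dist d0 S f g = (SUP x\<in>space d0. SUP a\<in>S x. ereal \<bar>f x a - g x a\<bar>)"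

text \<open>Compactness of a family of functions for the (pseudo)metric supp_dist,
  in its (equivalent for pseudometric spaces) sequential form.\<close>
definition supp_compact :: "'x measure \<Rightarrow> ('x \<Rightarrow> 'a set) \<Rightarrow> ('x \<Rightarrow> 'a \<Rightarrow> real) set \<Rightarrow> bool" where
  "supp_compact d0 S F \<longleftrightarrow>
     (\<forall>r. (\<forall>n. r n \<in> F) \<longrightarrow>
        (\<exists>l\<in>F. \<exists>\<sigma>::nat\<Rightarrow>nat. strict_mono \<sigma> \<and>
            (\<lambda>n. supp_dist d0 S (r (\<sigma> n)) l) \<longlonglongrightarrow> 0))"

text \<open>Temperature-zero regret G_p(R) with tie-breaking rule tb.\<close>
definition regret :: "'x measure \<Rightarrow> (('x \<Rightarrow> 'a \<Rightarrow> real) \<Rightarrow> 'x \<Rightarrow> 'a)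
    \<Rightarrow> ('x \<Rightarrow> 'a \<Rightarrow> real) \<Rightarrow> ('x \<Rightarrow> 'a \<Rightarrow> real) \<Rightarrow> real" where
  "regret d0 tb Rp R = (\<integral>x. Rp x (tb Rp x) - Rp x (tb R x) \<partial>d0)"

end

theory Submission
  imports Defs
begin

text \<open>The margin \<open>\<Delta>\<close> makes the argmax stable: two rewards within \<open>\<Delta>/2\<close> of each other
  on the support have almost surely the same argmax. The regret \<open>\<G>\<^sub>p(R\<^sub>q)\<close> vanishes when the
  argmaxes of \<open>R\<^sub>p\<close> and \<open>R\<^sub>q\<close> agree almost surely, and is otherwise at least \<open>\<Delta>\<close> times the
  (positive) measure of the set where they disagree; that measure is locally constant in
  \<open>(p, q)\<close>. If positive regrets accumulated at 0, compactness would give pairs converging to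
  some \<open>(p\<^sub>0, q\<^sub>0)\<close>, whose regrets would eventually be bounded below by \<open>\<Delta>\<close> times the
  disagreement measure of \<open>(p\<^sub>0, q\<^sub>0)\<close>, which is positive.\<close>

lemma (in finite_measure) integral_eq_0_or_ge_measure:
  fixes f :: "'a \<Rightarrow> real"
  assumes D: "D \<in> sets M"
    and f: "AE x in M. (x \<in> D \<longrightarrow> c \<le> f x) \<and> (x \<notin> D \<longrightarrow> f x = 0)"
  shows "integral\<^sup>L M f = 0 \<or> (0 < measure M D \<and> c * measure M D \<le> integral\<^sup>L M f)"
proof (cases "measure M D = 0")
  case True
  then have "AE x in M. x \<notin> D"
    using D by (intro AE_not_in) (simp add: null_sets_def emeasure_eq_measure)
  with f have "AE x in M. f x = 0"
    by eventually_elim auto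
  then show ?thesis
    by (simp add: integral_eq_zero_AE)
next
  case False
  then have pos: "0 < measure M D"
    using measure_nonneg[of M D] by linarith
  show ?thesis
  proof (cases "integrable M f")
    case True
    have "c * measure M D = integral\<^sup>L M (\<lambda>x. c * indicator D x)"
      using D by simp
    also have "\<dots> \<le> integral\<^sup>L M f"
    proof (rule integral_mono_AE)
      show "integrable M (\<lambda>x. c * indicator D x)"
        using D by (intro integrable_mult_right integrable_real_indicator)
          (simp_all add: emeasure_eq_measure)
      show "AE x in M. c * indicator D x \<le> f x"
        using f by eventually_elim (auto simp: indicator_def)
    qed (rule True)
    finally show ?thesis
      using pos by simp
  qed (simp add: not_integrable_integral_eq)
qed

lemma argmax_eq_if_close:
  fixes g h :: "'a \<Rightarrow> real"
  assumes "a \<in> S" "b \<in> S"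
    and margin: "\<forall>c\<in>S. c \<noteq> a \<longrightarrow> g c \<le> g a - \<Delta>"
    and b_max: "h a \<le> h b"
    and close: "\<forall>c\<in>S. \<bar>h c - g c\<bar> < \<Delta> / 2"
  shows "b = a"
proof (rule ccontr)
  assume "b \<noteq> a"
  then have "g b \<le> g a - \<Delta>"
    using margin \<open>b \<in> S\<close> by blast
  moreover have "\<bar>h a - g a\<bar> < \<Delta> / 2" "\<bar>h b - g b\<bar> < \<Delta> / 2"
    using close \<open>a \<in> S\<close> \<open>b \<in> S\<close> by auto
  ultimately show False
    using b_max by linarith
qed

lemma supp_dist_lessD:
  assumes "supp_dist M S f g < ereal r" "x \<in> space M" "a \<in> S x"
  shows "\<bar>f x a - g x a\<bar> < r"
proof -
  have "ereal \<bar>f x a - g x a\<bar> \<le> (SUP a\<in>S x. ereal \<bar>f x a - g x a\<bar>)"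
    using assms(3) by (rule SUP_upper)
  also have "\<dots> \<le> supp_dist M S f g"
    unfolding supp_dist_def using assms(2) by (rule SUP_upper)
  also have "\<dots> < ereal r"
    by (rule assms(1))
  finally show ?thesis
    by simp
qed

lemma supp_compact_pair_subseq:
  fixes f g :: "nat \<Rightarrow> 'x \<Rightarrow> 'a \<Rightarrow> real"
  assumes F: "supp_compact M S F" and "\<And>n. f n \<in> F" "\<And>n. g n \<in> F"
  obtains \<tau> l m where "strict_mono \<tau>" "l \<in> F" "m \<in> F"
    "(\<lambda>n. supp_dist M S (f (\<tau> n)) l) \<longlonglongrightarrow> 0"
    "(\<lambda>n. supp_dist M S (g (\<tau> n)) m) \<longlonglongrightarrow> 0"
proof -
  obtain l \<sigma> where l: "l \<in> F" "strict_mono \<sigma>" "(\<lambda>n. supp_dist M S (f (\<sigma> n)) l) \<longlonglongrightarrow> 0"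
    using F assms(2) unfolding supp_compact_def by blast
  obtain m \<sigma>' where m: "m \<in> F" "strict_mono \<sigma>'" "(\<lambda>n. supp_dist M S (g (\<sigma> (\<sigma>' n))) m) \<longlonglongrightarrow> 0"
    using F[unfolded supp_compact_def, rule_format, of "\<lambda>n. g (\<sigma> n)"] assms(3) by blast
  have "(\<lambda>n. supp_dist M S (f (\<sigma> (\<sigma>' n))) l) \<longlonglongrightarrow> 0"
    using LIMSEQ_subseq_LIMSEQ[OF l(3) m(2)] by (simp add: o_def)
  then show thesis
    using that[of "\<sigma> \<circ> \<sigma>'"] strict_mono_o[OF l(2) m(2)] l(1) m(1,3) by (simp add: o_def)
qed

locale margin_reward_family = prob_space d0 for d0 :: "'x measure" +
  fixes S :: "'x \<Rightarrow> 'a::{metric_space, second_countable_topology} set"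
    and tb :: "('x \<Rightarrow> 'a \<Rightarrow> real) \<Rightarrow> 'x \<Rightarrow> 'a"
    and P :: "'p set"
    and R :: "'p \<Rightarrow> 'x \<Rightarrow> 'a \<Rightarrow> real"
    and \<Delta> :: real
  assumes margin_pos: "0 < \<Delta>"
    and tb_measurable: "p \<in> P \<Longrightarrow> tb (R p) \<in> borel_measurable d0"
    and tb_argmax: "p \<in> P \<Longrightarrow> x \<in> space d0 \<Longrightarrow>
        tb (R p) x \<in> S x \<and> (\<forall>a\<in>S x. R p x a \<le> R p x (tb (R p) x))"
    and margin: "p \<in> P \<Longrightarrow> AE x in d0. \<forall>a\<in>S x.
        a \<noteq> tb (R p) x \<longrightarrow> R p x a \<le> R p x (tb (R p) x) - \<Delta>"
begin

definition disagreement :: "'p \<Rightarrow> 'p \<Rightarrow> 'x set" where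
  "disagreement p q = {x\<in>space d0. tb (R p) x \<noteq> tb (R q) x}"

lemma sets_disagreement:
  assumes "p \<in> P" "q \<in> P"
  shows "disagreement p q \<in> sets d0"
proof -
  have "(\<lambda>x. dist (tb (R p) x) (tb (R q) x)) \<in> borel_measurable d0"
    using tb_measurable[OF assms(1)] tb_measurable[OF assms(2)] by measurable
  then have "{x\<in>space d0. dist (tb (R p) x) (tb (R q) x) \<noteq> 0} \<in> sets d0"
    by measurable
  then show ?thesis
    unfolding disagreement_def by simp
qed

lemma regret_eq_0_or_ge_disagreement:
  assumes "p \<in> P" "q \<in> P"
  shows "regret d0 tb (R p) (R q) = 0 \<or>
    (0 < measure d0 (disagreement p q) \<and>
     \<Delta> * measure d0 (disagreement p q) \<le> regret d0 tb (R p) (R q))"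
  unfolding regret_def
proof (rule integral_eq_0_or_ge_measure[OF sets_disagreement[OF assms]])
  show "AE x in d0. (x \<in> disagreement p q \<longrightarrow> \<Delta> \<le> R p x (tb (R p) x) - R p x (tb (R q) x)) \<and>
      (x \<notin> disagreement p q \<longrightarrow> R p x (tb (R p) x) - R p x (tb (R q) x) = 0)"
    using margin[OF assms(1)] AE_space
  proof eventually_elim
    case (elim x)
    then show ?case
      using tb_argmax[OF assms(2) \<open>x \<in> space d0\<close>] unfolding disagreement_def by auto
  qed
qed

lemma tb_AE_eq_if_close:
  assumes "p \<in> P" "p' \<in> P" and close: "supp_dist d0 S (R p') (R p) < ereal (\<Delta> / 2)"
  shows "AE x in d0. tb (R p') x = tb (R p) x"
  using margin[OF assms(1)] AE_space
proof eventually_elim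
  case (elim x)
  note p_max = tb_argmax[OF assms(1) \<open>x \<in> space d0\<close>]
    and p'_max = tb_argmax[OF assms(2) \<open>x \<in> space d0\<close>]
  show ?case
  proof (rule argmax_eq_if_close[where g = "R p x" and h = "R p' x"])
    show "\<forall>c\<in>S x. \<bar>R p' x c - R p x c\<bar> < \<Delta> / 2"
      using supp_dist_lessD[OF close \<open>x \<in> space d0\<close>] by blast
  qed (use elim(1) p_max p'_max in auto)
qed

lemma measure_disagreement_eq_if_close:
  assumes "p \<in> P" "q \<in> P" "p' \<in> P" "q' \<in> P"
    and "supp_dist d0 S (R p') (R p) < ereal (\<Delta> / 2)"
    and "supp_dist d0 S (R q') (R q) < ereal (\<Delta> / 2)"
  shows "measure d0 (disagreement p' q') = measure d0 (disagreement p q)"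
proof (rule measure_eq_AE)
  show "AE x in d0. x \<in> disagreement p' q' \<longleftrightarrow> x \<in> disagreement p q"
    using tb_AE_eq_if_close[OF assms(1,3,5)] tb_AE_eq_if_close[OF assms(2,4,6)]
    by eventually_elim (auto simp: disagreement_def)
qed (use assms sets_disagreement in auto)

lemma regret_ge_disagreement_if_close:
  assumes "p0 \<in> P" "q0 \<in> P" "p \<in> P" "q \<in> P"
    and "supp_dist d0 S (R p) (R p0) < ereal (\<Delta> / 2)"
    and "supp_dist d0 S (R q) (R q0) < ereal (\<Delta> / 2)"
    and "regret d0 tb (R p) (R q) \<noteq> 0"
  shows "0 < \<Delta> * measure d0 (disagreement p0 q0) \<and>
    \<Delta> * measure d0 (disagreement p0 q0) \<le> regret d0 tb (R p) (R q)"
  using regret_eq_0_or_ge_disagreement[OF assms(3,4)] measure_disagreement_eq_if_close[OF assms(1-6)]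
    assms(7) margin_pos by auto

theorem regret_isolated_from_0:
  assumes compact: "supp_compact d0 S (R ` P)"
  shows "\<exists>\<epsilon>>0. \<forall>p\<in>P. \<forall>q\<in>P.
    regret d0 tb (R p) (R q) = 0 \<or> regret d0 tb (R p) (R q) \<ge> \<epsilon>"
proof (rule ccontr)
  assume no_gap: "\<not> ?thesis"
  have "\<forall>n. \<exists>p\<in>P. \<exists>q\<in>P. regret d0 tb (R p) (R q) \<noteq> 0 \<and>
      regret d0 tb (R p) (R q) < inverse (real (Suc n))"
  proof
    fix n :: nat
    have "0 < inverse (real (Suc n))"
      by simp
    then show "\<exists>p\<in>P. \<exists>q\<in>P. regret d0 tb (R p) (R q) \<noteq> 0 \<and>
        regret d0 tb (R p) (R q) < inverse (real (Suc n))"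
      using no_gap by (meson not_le)
  qed
  then obtain ps qs where pq: "\<And>n. ps n \<in> P" "\<And>n. qs n \<in> P"
    and nonzero: "\<And>n. regret d0 tb (R (ps n)) (R (qs n)) \<noteq> 0"
    and small: "\<And>n. regret d0 tb (R (ps n)) (R (qs n)) < inverse (real (Suc n))"
    by metis
  obtain \<tau> l m where \<tau>: "strict_mono \<tau>" and "l \<in> R ` P" "m \<in> R ` P"
    and lim_l: "(\<lambda>n. supp_dist d0 S (R (ps (\<tau> n))) l) \<longlonglongrightarrow> 0"
    and lim_m: "(\<lambda>n. supp_dist d0 S (R (qs (\<tau> n))) m) \<longlonglongrightarrow> 0"
    by (rule supp_compact_pair_subseq[OF compact, of "\<lambda>n. R (ps n)" "\<lambda>n. R (qs n)"])
      (use pq in auto)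
  then obtain p0 q0 where "p0 \<in> P" "q0 \<in> P" "l = R p0" "m = R q0"
    by blast
  define c where "c = \<Delta> * measure d0 (disagreement p0 q0)"
  have half: "0 < ereal (\<Delta> / 2)"
    using margin_pos by simp
  have "eventually (\<lambda>n. 0 < c \<and> c \<le> regret d0 tb (R (ps (\<tau> n))) (R (qs (\<tau> n)))) sequentially"
    using order_tendstoD(2)[OF lim_l half] order_tendstoD(2)[OF lim_m half]
    unfolding c_def \<open>l = R p0\<close> \<open>m = R q0\<close>
    by eventually_elim
      (rule regret_ge_disagreement_if_close; simp add: pq nonzero \<open>p0 \<in> P\<close> \<open>q0 \<in> P\<close>)
  then have "0 < c"
    and large: "eventually (\<lambda>n. c \<le> regret d0 tb (R (ps (\<tau> n))) (R (qs (\<tau> n)))) sequentially"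
    by (simp_all add: eventually_conj_iff)
  have "(\<lambda>n. inverse (real (Suc (\<tau> n)))) \<longlonglongrightarrow> 0"
    using LIMSEQ_subseq_LIMSEQ[OF LIMSEQ_inverse_real_of_nat \<tau>] by (simp add: o_def)
  then have "eventually (\<lambda>n. inverse (real (Suc (\<tau> n))) < c) sequentially"
    using \<open>0 < c\<close> by (rule order_tendstoD(2))
  then have "eventually (\<lambda>n. regret d0 tb (R (ps (\<tau> n))) (R (qs (\<tau> n))) < c) sequentially"
    by (rule eventually_mono) (erule less_trans[OF small])
  with large have "eventually (\<lambda>n. False) sequentially"
    by eventually_elim linarith
  then show False
    by simp
qed

end

theorem lemma1:
  fixes d0 :: "'x measure"
    and \<pi>0 :: "'x \<Rightarrow> 'a::{metric_space, second_countable_topology} measure"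
    and tb :: "('x \<Rightarrow> 'a \<Rightarrow> real) \<Rightarrow> 'x \<Rightarrow> 'a"
    and P :: "'p set"
    and R :: "'p \<Rightarrow> 'x \<Rightarrow> 'a \<Rightarrow> real"
  assumes d0_prob: "prob_space d0"
    and kernel: "\<pi>0 \<in> d0 \<rightarrow>\<^sub>M prob_algebra borel"
    and R_meas: "\<And>p. p \<in> P \<Longrightarrow> (\<lambda>(x, a). R p x a) \<in> borel_measurable (d0 \<Otimes>\<^sub>M borel)"
    and R_centered: "\<And>p x. p \<in> P \<Longrightarrow> x \<in> space d0 \<Longrightarrow> (\<integral>a. R p x a \<partial>\<pi>0 x) = 0"
    and tb_meas: "\<And>Rf. Rf \<in> borel_measurable (d0 \<Otimes>\<^sub>M borel) \<Longrightarrow> tb (\<lambda>x a. Rf (x, a)) \<in> d0 \<rightarrow>\<^sub>M borel"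
    and tb_argmax: "\<And>p x. p \<in> P \<Longrightarrow> x \<in> space d0 \<Longrightarrow>
        tb (R p) x \<in> tsupp (\<pi>0 x) \<and> (\<forall>a\<in>tsupp (\<pi>0 x). R p x a \<le> R p x (tb (R p) x))"
    and C1_compact: "supp_compact d0 (\<lambda>x. tsupp (\<pi>0 x)) (R ` P)"
    and C1_cont: "\<And>p. p \<in> P \<Longrightarrow> AE x in d0. continuous_on (tsupp (\<pi>0 x)) (R p x)"
    and C2: "\<exists>\<Delta>>0. \<forall>p\<in>P. AE x in d0. \<forall>a\<in>tsupp (\<pi>0 x).
        a \<noteq> tb (R p) x \<longrightarrow> R p x a \<le> R p x (tb (R p) x) - \<Delta>"
  shows "\<exists>\<epsilon>>0. \<forall>p\<in>P. \<forall>q\<in>P.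
           regret d0 tb (R p) (R q) = 0 \<or> regret d0 tb (R p) (R q) \<ge> \<epsilon>"
proof -
  obtain \<Delta> where "0 < \<Delta>" and margin: "\<forall>p\<in>P. AE x in d0. \<forall>a\<in>tsupp (\<pi>0 x).
      a \<noteq> tb (R p) x \<longrightarrow> R p x a \<le> R p x (tb (R p) x) - \<Delta>"
    using C2 by blast
  interpret margin_reward_family d0 "\<lambda>x. tsupp (\<pi>0 x)" tb P R \<Delta>
  proof (intro margin_reward_family.intro margin_reward_family_axioms.intro d0_prob \<open>0 < \<Delta>\<close>)
    show "tb (R p) \<in> borel_measurable d0" if "p \<in> P" for p
      using tb_meas[OF R_meas[OF that]] by simp
  qed (use tb_argmax margin in auto)
  show ?thesis
    using regret_isolated_from_0[OF C1_compact] .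
qed

end
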